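(* Let $q$ be a prime power and $k\ge 8$. Let $\mathbf F_q=\{f_1=0,f_2,\dots,f_{q-1},f_q=1\}$, let $U_i=\langle\mathbf e_1+f_i\mathbf e_2,\mathbf e_3+f_i\mathbf e_4\rangle$ and $U_{q+i}=\langle\mathbf e_5+f_i\mathbf e_6,\mathbf e_7+f_i\mathbf e_8\rangle$ for $1\le i\le q$ (with $\mathbf e_j$ the standard basis of $\mathbf F_q^k$), let $U$ be the set of nonzero vectors of $\mathbf F_q^k$ outside $U_1\cup\dots\cup U_{2q}$, and let $\mathbf C_2$ be the linear $[n,k,d]_q$ code, $n=\frac{(q^k-1)-2q(q^2-1)}{q-1}$, $d=q^{k-1}-2q^2$, whose generator matrix has as columns exactly one representative of each class $\{\lambda\mathbf v:\lambda\in\mathbf F_q^*\}$, $\mathbf v\in U$; it is a locally recoverable code with locality $2$. If $q=2$, the CM defect of $\mathbf C_2$ is at most $2$; if $q\ge3$, the CM defect of $\mathbf C_2$ is at most $1$.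
   Context: $k^{(q)}_{\mathrm{opt}}(n,d)$ denotes the maximum dimension of a linear code over $\mathbf F_q$ of length $n$ and minimum distance $d$. For a locally recoverable linear $[n,k,d]_q$ code with locality $r$ (each coordinate's value is determined, on the code, by the values on some set of at most $r$ other coordinates), the Cadambe–Mazumdar bound states $k\le\min_{t\in\mathbb Z_{>0}}\{tr+k^{(q)}_{\mathrm{opt}}(n-t(r+1),d)\}$, and the CM defect is $\min_{t\in\mathbb Z_{>0}}\{tr+k^{(q)}_{\mathrm{opt}}(n-t(r+1),d)\}-k$; here $r=2$. *)

theory Defs
  imports Complex_Main "HOL-Library.Function_Algebras"
begin

text \<open>Vectors of length n over a field 'a are functions nat => 'a vanishing outside {..<n}.
  Scalar multiplication is pointwise.\<close>

definition vscale :: "'a::field \<Rightarrow> (nat \<Rightarrow> 'a) \<Rightarrow> (nat \<Rightarrow> 'a)" where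
  "vscale c v = (\<lambda>j. c * v j)"

definition vecs :: "nat \<Rightarrow> (nat \<Rightarrow> 'a::zero) set" where
  "vecs n = {v. \<forall>j\<ge>n. v j = 0}"

definition linear_code :: "nat \<Rightarrow> (nat \<Rightarrow> 'a::field) set \<Rightarrow> bool" where
  "linear_code n C \<longleftrightarrow> C \<subseteq> vecs n \<and> 0 \<in> C \<and>
     (\<forall>u\<in>C. \<forall>w\<in>C. u + w \<in> C) \<and> (\<forall>c. \<forall>u\<in>C. vscale c u \<in> C)"

definition code_dim :: "(nat \<Rightarrow> 'a::field) set \<Rightarrow> nat" where
  "code_dim C = vector_space.dim vscale C"

definition hweight :: "nat \<Rightarrow> (nat \<Rightarrow> 'a::zero) \<Rightarrow> nat" where
  "hweight n v = card {j. j < n \<and> v j \<noteq> 0}"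

definition min_dist :: "nat \<Rightarrow> (nat \<Rightarrow> 'a::field) set \<Rightarrow> nat" where
  "min_dist n C = Min {hweight n c | c. c \<in> C \<and> c \<noteq> 0}"

text \<open>k_opt^(q)(n,d): maximum dimension of a linear code of length n over 'a
  with minimum distance (at least) d; the field is given by the type 'a.\<close>
definition kopt :: "'a::{finite,field} itself \<Rightarrow> nat \<Rightarrow> nat \<Rightarrow> nat" where
  "kopt _ n d = Max {code_dim C | C :: (nat \<Rightarrow> 'a) set.
       linear_code n C \<and> (\<forall>c\<in>C. c \<noteq> 0 \<longrightarrow> d \<le> hweight n c)}"

text \<open>CM defect of a linear [n,k,d] code C with locality r (n,k,d the actual parameters of C).
  The minimum ranges over positive t with t(r+1) <= n.\<close>
definition CM_defect :: "nat \<Rightarrow> nat \<Rightarrow> (nat \<Rightarrow> 'a::{finite,field}) set \<Rightarrow> int" where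
  "CM_defect r n C = int (Min {t * r + kopt TYPE('a) (n - t * (r + 1)) (min_dist n C) | t.
       0 < t \<and> t * (r + 1) \<le> n}) - int (code_dim C)"

text \<open>The code generated by the matrix whose columns are the list vs (vectors in F_q^k).\<close>
definition gen_code :: "nat \<Rightarrow> (nat \<Rightarrow> 'a::field) list \<Rightarrow> (nat \<Rightarrow> 'a) set" where
  "gen_code k vs = {(\<lambda>j. if j < length vs then (\<Sum>i<k. x i * (vs ! j) i) else 0) | x. True}"

text \<open>Standard basis vector e_j (1-based index j as in the paper, stored at position j-1).\<close>
definition ebas :: "nat \<Rightarrow> nat \<Rightarrow> 'a::{zero,one}" where
  "ebas j = (\<lambda>i. if i = j - 1 then 1 else 0)"

definition span2 :: "(nat \<Rightarrow> 'a::field) \<Rightarrow> (nat \<Rightarrow> 'a) \<Rightarrow> (nat \<Rightarrow> 'a) set" where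
  "span2 u w = {vscale a u + vscale b w | a b. True}"

text \<open>The subspaces U_1, ..., U_{2q}, indexed by a field element f and a flag.\<close>
definition U_first :: "'a::field \<Rightarrow> (nat \<Rightarrow> 'a) set" where
  "U_first f = span2 (ebas 1 + vscale f (ebas 2)) (ebas 3 + vscale f (ebas 4))"

definition U_second :: "'a::field \<Rightarrow> (nat \<Rightarrow> 'a) set" where
  "U_second f = span2 (ebas 5 + vscale f (ebas 6)) (ebas 7 + vscale f (ebas 8))"

definition U_set :: "nat \<Rightarrow> (nat \<Rightarrow> 'a::{finite,field}) set" where
  "U_set k = {v \<in> vecs k. v \<noteq> 0 \<and> (\<forall>f. v \<notin> U_first f \<and> v \<notin> U_second f)}"

definition proj_reps :: "(nat \<Rightarrow> 'a::field) list \<Rightarrow> (nat \<Rightarrow> 'a) set \<Rightarrow> bool" where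
  "proj_reps vs S \<longleftrightarrow> set vs \<subseteq> S \<and>
     (\<forall>v\<in>S. \<exists>!j. j < length vs \<and> (\<exists>c. c \<noteq> 0 \<and> vs ! j = vscale c v))"

end

theory Submission
  imports Defs "HOL-Library.Cardinality" "HOL-Library.FuncSet"
begin

text \<open>A nonzero message x defines the functional v \<mapsto> x \<cdot> v on F_q^k, which is nonzero on
  (q-1) q^(k-1) vectors. At most 2q (q-1) q of them lie in U_1, ..., U_2q; the others lie in U and
  come in classes of q-1 vectors, one class for each nonzero coordinate of the codeword of x. So
  C_2 has dimension k and minimum distance at least d = q^(k-1) - 2q^2, and counting U gives
  (q-1) n \<le> q^k - 1 - 2q (q^2-1). In the Cadambe-Mazumdar bound take t = 1 if q \<ge> 3 and t = 2 if
  q = 2: the Plotkin bound q (q^K - 1) d \<le> (q-1) q^K N then fails for N = n - 3, K = k, resp.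
  N = n - 6, K = k - 1, hence k_opt(N, d) < K.\<close>

interpretation V: vector_space "vscale :: 'a::field \<Rightarrow> (nat \<Rightarrow> 'a) \<Rightarrow> (nat \<Rightarrow> 'a)"
  by unfold_locales (auto simp: vscale_def fun_eq_iff algebra_simps)

lemma vscale_apply [simp]: "vscale c v j = c * v j"
  by (simp add: vscale_def)

lemma card_field_ge_2: "2 \<le> CARD('a::{finite,field})"
proof -
  have "card {0::'a, 1} \<le> CARD('a)" by (rule card_mono) auto
  then show ?thesis by simp
qed

lemma card_subspace_eq_card_kernel:
  fixes S :: "(nat \<Rightarrow> 'a::{finite,field}) set" and \<phi> :: "(nat \<Rightarrow> 'a) \<Rightarrow> 'a"
  assumes S: "V.subspace S"
    and additive: "\<And>u w. \<phi> (u + w) = \<phi> u + \<phi> w"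
    and homogeneous: "\<And>c u. \<phi> (vscale c u) = c * \<phi> u"
    and s: "s \<in> S" "\<phi> s \<noteq> 0"
  shows "card S = card {v\<in>S. \<phi> v = 0} * CARD('a)"
proof -
  define s1 where "s1 = vscale (inverse (\<phi> s)) s"
  have s1: "s1 \<in> S" "\<phi> s1 = 1"
    using s S homogeneous by (auto simp: s1_def V.subspace_scale)
  have kernel_part: "v + vscale (- \<phi> v) s1 \<in> {v\<in>S. \<phi> v = 0}" if "v \<in> S" for v
  proof -
    have "\<phi> (v + vscale (- \<phi> v) s1) = 0"
      by (simp only: additive homogeneous s1(2)) simp
    then show ?thesis
      using that S s1 by (simp add: V.subspace_diff V.subspace_scale)
  qed
  have "bij_betw (\<lambda>(w, a). w + vscale a s1) ({v\<in>S. \<phi> v = 0} \<times> UNIV) S"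
  proof (rule bij_betwI[where g = "\<lambda>v. (v + vscale (- \<phi> v) s1, \<phi> v)"])
    show "(\<lambda>(w, a). w + vscale a s1) \<in> {v\<in>S. \<phi> v = 0} \<times> UNIV \<rightarrow> S"
      using S s1 by (auto simp: V.subspace_add V.subspace_scale)
    show "(\<lambda>v. (v + vscale (- \<phi> v) s1, \<phi> v)) \<in> S \<rightarrow> {v\<in>S. \<phi> v = 0} \<times> UNIV"
      using kernel_part by blast
    show "(\<lambda>v. (v + vscale (- \<phi> v) s1, \<phi> v)) ((\<lambda>(w, a). w + vscale a s1) x) = x"
      if "x \<in> {v\<in>S. \<phi> v = 0} \<times> UNIV" for x
      using that by (auto simp: additive homogeneous s1 fun_eq_iff)
    show "(\<lambda>(w, a). w + vscale a s1) ((\<lambda>v. (v + vscale (- \<phi> v) s1, \<phi> v)) v) = v" for v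
      by (simp add: fun_eq_iff)
  qed
  then show ?thesis
    using bij_betw_same_card by (fastforce simp: card_cartesian_product)
qed

lemma card_nonvanishing_subspace:
  fixes S :: "(nat \<Rightarrow> 'a::{finite,field}) set" and \<phi> :: "(nat \<Rightarrow> 'a) \<Rightarrow> 'a"
  assumes S: "V.subspace S" "finite S"
    and additive: "\<And>u w. \<phi> (u + w) = \<phi> u + \<phi> w"
    and homogeneous: "\<And>c u. \<phi> (vscale c u) = c * \<phi> u"
  shows "CARD('a) * card {v\<in>S. \<phi> v \<noteq> 0} \<le> (CARD('a) - 1) * card S"
    and "\<exists>s\<in>S. \<phi> s \<noteq> 0 \<Longrightarrow> CARD('a) * card {v\<in>S. \<phi> v \<noteq> 0} = (CARD('a) - 1) * card S"
proof -
  have split: "card {v\<in>S. \<phi> v \<noteq> 0} + card {v\<in>S. \<phi> v = 0} = card S"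
    using S(2) by (subst card_Un_disjoint[symmetric]) (auto intro: arg_cong[where f = card])
  show eq: "CARD('a) * card {v\<in>S. \<phi> v \<noteq> 0} = (CARD('a) - 1) * card S"
    if "\<exists>s\<in>S. \<phi> s \<noteq> 0"
  proof -
    from that obtain s where "s \<in> S" "\<phi> s \<noteq> 0" by blast
    then have card_S: "card S = card {v\<in>S. \<phi> v = 0} * CARD('a)"
      using card_subspace_eq_card_kernel[OF S(1) additive homogeneous] by blast
    obtain p where p: "CARD('a) = Suc p"
      using not0_implies_Suc by fastforce
    have "card {v\<in>S. \<phi> v \<noteq> 0} = card {v\<in>S. \<phi> v = 0} * p"
      using split card_S p by simp
    then show ?thesis
      using card_S p by (simp add: algebra_simps)
  qed
  show "CARD('a) * card {v\<in>S. \<phi> v \<noteq> 0} \<le> (CARD('a) - 1) * card S"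
  proof (cases "\<exists>s\<in>S. \<phi> s \<noteq> 0")
    case False
    then have "{v\<in>S. \<phi> v \<noteq> 0} = {}" by blast
    then show ?thesis by (simp only: card.empty)
  qed (use eq in simp)
qed

lemma subspace_vecs: "V.subspace (vecs n :: (nat \<Rightarrow> 'a::field) set)"
  by (simp add: V.subspace_def vecs_def)

lemma bij_betw_vecs_PiE:
  "bij_betw (\<lambda>v. restrict v {..<n}) (vecs n :: (nat \<Rightarrow> 'a::zero) set) (PiE {..<n} (\<lambda>_. UNIV))"
  by (rule bij_betwI[where g = "\<lambda>v j. if j < n then v j else 0"])
    (auto simp: vecs_def fun_eq_iff PiE_def extensional_def)

lemma finite_vecs: "finite (vecs n :: (nat \<Rightarrow> 'a::{finite,zero}) set)"
  using bij_betw_finite[OF bij_betw_vecs_PiE[of n, where 'a='a]] by (simp add: finite_PiE)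

lemma card_vecs: "card (vecs n :: (nat \<Rightarrow> 'a::{finite,zero}) set) = CARD('a) ^ n"
  using bij_betw_same_card[OF bij_betw_vecs_PiE[of n, where 'a='a]] by (simp add: card_PiE)

lemma linear_code_subspace: "linear_code N C \<Longrightarrow> V.subspace C"
  by (simp add: linear_code_def V.subspace_def)

lemma linear_code_finite: "linear_code N (C :: (nat \<Rightarrow> 'a::{finite,field}) set) \<Longrightarrow> finite C"
  using finite_vecs finite_subset by (metis linear_code_def)

lemma card_filter_eq_sum: "finite A \<Longrightarrow> card {x\<in>A. P x} = (\<Sum>x\<in>A. if P x then 1 else 0)"
  by (simp add: sum.If_cases Int_def)

lemma plotkin_bound:
  fixes C :: "(nat \<Rightarrow> 'a::{finite,field}) set"
  assumes C: "linear_code N C" and weight: "\<And>c. c \<in> C \<Longrightarrow> c \<noteq> 0 \<Longrightarrow> d \<le> hweight N c"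
  shows "CARD('a) * ((card C - 1) * d) \<le> (CARD('a) - 1) * card C * N"
proof -
  have fin: "finite C" and sub: "V.subspace C" and "0 \<in> C"
    using C linear_code_finite linear_code_subspace by (auto simp: linear_code_def)
  have "(card C - 1) * d = card (C - {0}) * d"
    using fin \<open>0 \<in> C\<close> by simp
  also have "\<dots> \<le> (\<Sum>c\<in>C - {0}. hweight N c)"
    using weight sum_bounded_below[of "C - {0}" d "hweight N"] by simp
  also have "\<dots> \<le> (\<Sum>c\<in>C. hweight N c)"
    using fin by (intro sum_mono2) auto
  also have "\<dots> = (\<Sum>c\<in>C. \<Sum>j<N. if c j \<noteq> 0 then 1 else 0)"
    unfolding hweight_def using card_filter_eq_sum[of "{..<N}"] by simp
  also have "\<dots> = (\<Sum>j<N. card {c\<in>C. c j \<noteq> 0})"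
    using fin by (subst sum.swap) (simp add: card_filter_eq_sum)
  finally have "CARD('a) * ((card C - 1) * d) \<le> (\<Sum>j<N. CARD('a) * card {c\<in>C. c j \<noteq> 0})"
    by (simp flip: sum_distrib_left)
  also have "\<dots> \<le> (\<Sum>j<N. (CARD('a) - 1) * card C)"
    using card_nonvanishing_subspace(1)[OF sub fin] by (intro sum_mono) simp
  finally show ?thesis by (simp add: mult.commute)
qed

lemma card_linear_code:
  fixes C :: "(nat \<Rightarrow> 'a::{finite,field}) set"
  assumes C: "linear_code N C"
  shows "card C = CARD('a) ^ code_dim C"
proof -
  obtain B where B: "B \<subseteq> C" "V.independent B" "C \<subseteq> V.span B" "card B = code_dim C"
    using V.basis_exists unfolding code_dim_def by blast
  have finB: "finite B"
    using B(1) linear_code_finite[OF C] finite_subset by blast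
  have C_span: "C = V.span B"
    using B V.span_minimal[OF B(1) linear_code_subspace[OF C]] by blast
  let ?comb = "\<lambda>u. \<Sum>v\<in>B. vscale (u v) v"
  have "C = ?comb ` (B \<rightarrow>\<^sub>E UNIV)"
  proof -
    have "?comb u \<in> ?comb ` (B \<rightarrow>\<^sub>E UNIV)" for u
    proof
      show "?comb u = ?comb (restrict u B)"
        by (intro sum.cong) auto
    qed (auto simp only: restrict_PiE_iff)
    then show ?thesis
      unfolding C_span V.span_finite[OF finB] by blast
  qed
  moreover have "inj_on ?comb (B \<rightarrow>\<^sub>E UNIV)"
  proof (rule inj_onI)
    fix u u' assume u: "u \<in> B \<rightarrow>\<^sub>E UNIV" and u': "u' \<in> B \<rightarrow>\<^sub>E UNIV" and "?comb u = ?comb u'"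
    then have "(\<Sum>v\<in>B. vscale (u v - u' v) v) = 0"
      by (simp add: V.scale_left_diff_distrib sum_subtractf)
    then have "u v = u' v" if "v \<in> B" for v
      using V.independentD[OF B(2) finB subset_refl] that by fastforce
    then show "u = u'"
      using PiE_ext[OF u u'] by blast
  qed
  ultimately have "card C = card (B \<rightarrow>\<^sub>E (UNIV :: 'a set))"
    by (simp add: card_image)
  then show ?thesis
    using finB B(4) by (simp add: card_PiE)
qed

lemma kopt_less:
  assumes K: "0 < K"
    and plotkin_violated: "(CARD('a) - 1) * CARD('a) ^ K * N < CARD('a) * (CARD('a) ^ K - 1) * d"
  shows "kopt TYPE('a::{finite,field}) N d < K"
proof -
  let ?q = "CARD('a)"
  let ?dims = "{code_dim C | C :: (nat \<Rightarrow> 'a) set.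
      linear_code N C \<and> (\<forall>c\<in>C. c \<noteq> 0 \<longrightarrow> d \<le> hweight N c)}"
  have dim_less: "D < K" if "D \<in> ?dims" for D
  proof (rule ccontr)
    assume "\<not> D < K"
    obtain C :: "(nat \<Rightarrow> 'a) set" where C: "D = code_dim C" "linear_code N C"
      "\<And>c. c \<in> C \<Longrightarrow> c \<noteq> 0 \<Longrightarrow> d \<le> hweight N c"
      using \<open>D \<in> ?dims\<close> by blast
    \<comment> \<open>A violated Plotkin bound stays violated in every larger dimension D: multiply by q^(D-K).\<close>
    define m where "m = ?q ^ (D - K)"
    have "m \<ge> 1"
      by (simp add: m_def)
    have q_D: "?q ^ D = ?q ^ K * m"
      using \<open>\<not> D < K\<close> by (simp add: m_def flip: power_add)
    have "(?q - 1) * ?q ^ K * N * m < ?q * (?q ^ K - 1) * d * m"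
      using plotkin_violated \<open>m \<ge> 1\<close> by simp
    also have "\<dots> = ?q * (?q ^ K * m - m) * d"
      by (simp add: algebra_simps diff_mult_distrib)
    also have "\<dots> \<le> ?q * (?q ^ D - 1) * d"
      using \<open>m \<ge> 1\<close> q_D by (intro mult_le_mono) auto
    also have "\<dots> \<le> (?q - 1) * ?q ^ D * N"
      using plotkin_bound[OF C(2,3)] card_linear_code[OF C(2)] C(1) by (simp add: mult.assoc)
    finally show False
      using q_D by (simp add: algebra_simps)
  qed
  have "linear_code N ({0} :: (nat \<Rightarrow> 'a) set)"
    by (simp add: linear_code_def vecs_def vscale_def fun_eq_iff)
  then have "?dims \<noteq> {}"
    by blast
  moreover have "finite ?dims"
    using dim_less by (meson finite_lessThan finite_subset lessThan_iff subsetI)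
  ultimately show ?thesis
    unfolding kopt_def using dim_less by simp
qed

lemma CM_defect_le:
  fixes C :: "(nat \<Rightarrow> 'a::{finite,field}) set"
  assumes "0 < t" "t * (r + 1) \<le> n"
  shows "CM_defect r n C
    \<le> int (t * r + kopt TYPE('a) (n - t * (r + 1)) (min_dist n C)) - int (code_dim C)"
proof -
  let ?bound = "\<lambda>t. t * r + kopt TYPE('a) (n - t * (r + 1)) (min_dist n C)"
  have "{?bound t | t. 0 < t \<and> t * (r + 1) \<le> n} \<subseteq> ?bound ` {..n}"
    by (auto simp: le_trans[OF _ mult_le_mono1])
  then have "Min {?bound t | t. 0 < t \<and> t * (r + 1) \<le> n} \<le> ?bound t"
    using assms by (intro Min_le) (auto dest: finite_subset)
  then show ?thesis
    unfolding CM_defect_def by (intro diff_right_mono) (simp only: of_nat_le_iff)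
qed

lemma CM_defect_less:
  fixes C :: "(nat \<Rightarrow> 'a::{finite,field}) set"
  assumes "0 < t" "t * (r + 1) \<le> n" "0 < K"
    and "(CARD('a) - 1) * CARD('a) ^ K * (n - t * (r + 1))
      < CARD('a) * (CARD('a) ^ K - 1) * min_dist n C"
  shows "CM_defect r n C < int (t * r + K) - int (code_dim C)"
  using CM_defect_le[OF assms(1,2), of C] kopt_less[OF assms(3,4)] by linarith

definition dot :: "nat \<Rightarrow> (nat \<Rightarrow> 'a::field) \<Rightarrow> (nat \<Rightarrow> 'a) \<Rightarrow> 'a" where
  "dot k x v = (\<Sum>i<k. x i * v i)"

lemma dot_zero_right [simp]: "dot k x 0 = 0"
  by (simp add: dot_def)

lemma dot_add_right: "dot k x (u + w) = dot k x u + dot k x w"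
  by (simp add: dot_def sum.distrib distrib_left)

lemma dot_scale_right: "dot k x (vscale c u) = c * dot k x u"
  by (simp add: dot_def sum_distrib_left algebra_simps)

definition encode :: "nat \<Rightarrow> (nat \<Rightarrow> 'a::field) list \<Rightarrow> (nat \<Rightarrow> 'a) \<Rightarrow> nat \<Rightarrow> 'a" where
  "encode k vs x = (\<lambda>j. if j < length vs then dot k x (vs ! j) else 0)"

lemma gen_code_eq_range_encode: "gen_code k vs = range (encode k vs)"
  unfolding gen_code_def encode_def dot_def by auto

lemma encode_add: "encode k vs (x + y) = encode k vs x + encode k vs y"
  by (simp add: encode_def dot_def fun_eq_iff sum.distrib distrib_right)

lemma encode_diff: "encode k vs (x - y) = encode k vs x - encode k vs y"
  by (simp add: encode_def dot_def fun_eq_iff sum_subtractf left_diff_distrib)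

lemma encode_scale: "encode k vs (vscale c x) = vscale c (encode k vs x)"
  by (simp add: encode_def dot_def fun_eq_iff sum_distrib_left mult.assoc)

lemma encode_eq_0: "(\<And>i. i < k \<Longrightarrow> x i = 0) \<Longrightarrow> encode k vs x = 0"
  by (simp add: encode_def dot_def fun_eq_iff)

lemma hweight_encode:
  "hweight (length vs) (encode k vs x) = card {j. j < length vs \<and> dot k x (vs ! j) \<noteq> 0}"
  unfolding hweight_def encode_def by (rule arg_cong[where f = card]) auto

lemma hweight_le: "hweight n c \<le> n"
  unfolding hweight_def by (rule card_mono[of "{..<n}", simplified]) auto

lemma linear_code_gen_code: "linear_code (length vs) (gen_code k vs)"
  unfolding linear_code_def gen_code_eq_range_encode
proof (intro conjI ballI allI)
  show "range (encode k vs) \<subseteq> vecs (length vs)"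
    by (auto simp: vecs_def encode_def)
  have "encode k vs 0 = 0"
    by (rule encode_eq_0) simp
  then show "0 \<in> range (encode k vs)"
    by (metis rangeI)
next
  fix u w assume "u \<in> range (encode k vs)" "w \<in> range (encode k vs)"
  then obtain x y where "u = encode k vs x" "w = encode k vs y"
    by blast
  then show "u + w \<in> range (encode k vs)"
    by (metis encode_add rangeI)
next
  fix c u assume "u \<in> range (encode k vs)"
  then obtain x where "u = encode k vs x"
    by blast
  then show "vscale c u \<in> range (encode k vs)"
    by (metis encode_scale rangeI)
qed

lemma code_dim_gen_code_ge:
  fixes vs :: "(nat \<Rightarrow> 'a::{finite,field}) list"
  assumes nonzero: "\<And>x i. i < k \<Longrightarrow> x i \<noteq> 0 \<Longrightarrow> encode k vs x \<noteq> 0"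
  shows "k \<le> code_dim (gen_code k vs)"
proof -
  have "inj_on (encode k vs) (vecs k)"
  proof (rule inj_onI)
    fix x y assume x: "x \<in> vecs k" and y: "y \<in> vecs k" and "encode k vs x = encode k vs y"
    then have "encode k vs (x - y) = 0"
      by (simp add: encode_diff)
    then have "x i = y i" if "i < k" for i
      using nonzero[of i "x - y"] that by auto
    moreover have "x i = y i" if "\<not> i < k" for i
      using x y that by (simp add: vecs_def)
    ultimately show "x = y"
      by (meson ext)
  qed
  then have "CARD('a) ^ k = card (encode k vs ` vecs k)"
    by (simp add: card_image card_vecs)
  also have "\<dots> \<le> card (gen_code k vs)"
    using linear_code_finite[OF linear_code_gen_code]
    unfolding gen_code_eq_range_encode by (intro card_mono) auto
  also have "\<dots> = CARD('a) ^ code_dim (gen_code k vs)"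
    by (rule card_linear_code[OF linear_code_gen_code])
  finally show ?thesis
    using card_field_ge_2[where 'a = 'a] by (simp add: power_le_imp_le_exp)
qed

lemma min_dist_gen_code_ge:
  fixes vs :: "(nat \<Rightarrow> 'a::{finite,field}) list"
  assumes weight: "\<And>x i. i < k \<Longrightarrow> x i \<noteq> 0 \<Longrightarrow> d \<le> hweight (length vs) (encode k vs x)"
    and "0 < d" "0 < k"
  shows "d \<le> min_dist (length vs) (gen_code k vs)"
    and "d \<le> length vs"
proof -
  let ?W = "{hweight (length vs) c | c. c \<in> gen_code k vs \<and> c \<noteq> 0}"
  define e :: "nat \<Rightarrow> 'a" where "e = (\<lambda>i. if i = 0 then 1 else 0)"
  have "d \<le> hweight (length vs) (encode k vs e)"
    using weight[of 0 e] \<open>0 < k\<close> by (simp add: e_def)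
  then show "d \<le> length vs"
    using hweight_le le_trans by blast
  have "encode k vs e \<noteq> 0"
    using \<open>d \<le> hweight _ _\<close> \<open>0 < d\<close> by (auto simp: hweight_def)
  then have "?W \<noteq> {}"
    unfolding gen_code_eq_range_encode by blast
  moreover have "finite ?W"
    by (rule finite_subset[of _ "{..length vs}"]) (use hweight_le in auto)
  moreover have "d \<le> w" if "w \<in> ?W" for w
  proof -
    obtain x where x: "w = hweight (length vs) (encode k vs x)" "encode k vs x \<noteq> 0"
      using \<open>w \<in> ?W\<close> unfolding gen_code_eq_range_encode by blast
    then obtain i where "i < k" "x i \<noteq> 0"
      using encode_eq_0 by blast
    then show ?thesis
      using weight x(1) by blast
  qed
  ultimately show "d \<le> min_dist (length vs) (gen_code k vs)"
    unfolding min_dist_def by simp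
qed

lemma proj_reps_nth_mem: "proj_reps vs S \<Longrightarrow> j < length vs \<Longrightarrow> vs ! j \<in> S"
  unfolding proj_reps_def using nth_mem by blast

lemma proj_reps_index_unique:
  assumes reps: "proj_reps vs S" and "j < length vs" "j' < length vs"
    and "e \<noteq> 0" "vs ! j' = vscale e (vs ! j)"
  shows "j = j'"
proof -
  have "\<exists>!i. i < length vs \<and> (\<exists>c. c \<noteq> 0 \<and> vs ! i = vscale c (vs ! j))"
    using reps proj_reps_nth_mem[OF reps \<open>j < length vs\<close>] unfolding proj_reps_def by blast
  moreover have "vs ! j = vscale 1 (vs ! j)"
    by (simp add: vscale_def)
  ultimately show ?thesis
    using assms(2-) by (metis one_neq_zero)
qed

lemma bij_betw_proj_reps:
  fixes vs :: "(nat \<Rightarrow> 'a::field) list"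
  assumes reps: "proj_reps vs S" and "0 \<notin> S"
    and S_scale: "\<And>v c. v \<in> S \<Longrightarrow> c \<noteq> 0 \<Longrightarrow> vscale c v \<in> S"
    and P_scale: "\<And>v c. c \<noteq> 0 \<Longrightarrow> P (vscale c v) \<longleftrightarrow> P v"
  shows "bij_betw (\<lambda>(j, c). vscale c (vs ! j))
    ({j. j < length vs \<and> P (vs ! j)} \<times> - {0}) {v\<in>S. P v}"
proof -
  note vs_in = proj_reps_nth_mem[OF reps]
  have "j = j' \<and> c = c'"
    if j: "j < length vs" "c \<noteq> 0" and j': "j' < length vs" "c' \<noteq> 0"
      and eq: "vscale c (vs ! j) = vscale c' (vs ! j')" for j c j' c'
  proof -
    have "vs ! j' = vscale (c / c') (vs ! j)"
      using eq j'(2) by (simp add: fun_eq_iff field_simps)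
    then have "j = j'"
      using j j' by (intro proj_reps_index_unique[OF reps, of j j' "c / c'"]) simp_all
    moreover obtain i where "(vs ! j) i \<noteq> 0"
      using vs_in[OF j(1)] \<open>0 \<notin> S\<close> by (metis ext zero_fun_def)
    ultimately show ?thesis
      using fun_cong[OF eq, of i] by simp
  qed
  then have "inj_on (\<lambda>(j, c). vscale c (vs ! j)) ({j. j < length vs \<and> P (vs ! j)} \<times> - {0})"
    by (auto intro!: inj_onI)
  moreover have "(\<lambda>(j, c). vscale c (vs ! j)) ` ({j. j < length vs \<and> P (vs ! j)} \<times> - {0})
      = {v\<in>S. P v}"
  proof (intro equalityI subsetI)
    fix v assume "v \<in> {v\<in>S. P v}"
    then obtain j e where j: "j < length vs" "e \<noteq> 0" "vs ! j = vscale e v" "P v"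
      using reps unfolding proj_reps_def by blast
    then have "v = vscale (inverse e) (vs ! j)"
      by (simp add: fun_eq_iff)
    moreover have "P (vs ! j)"
      using j P_scale[of e v] by simp
    ultimately show "v \<in> (\<lambda>(j, c). vscale c (vs ! j)) ` ({j. j < length vs \<and> P (vs ! j)} \<times> - {0})"
      using j by (intro image_eqI[of _ _ "(j, inverse e)"]) auto
  qed (auto simp: vs_in S_scale P_scale)
  ultimately show ?thesis
    by (simp add: bij_betw_def)
qed

lemma card_proj_reps_filter:
  fixes vs :: "(nat \<Rightarrow> 'a::{finite,field}) list"
  assumes "proj_reps vs S" "0 \<notin> S"
    and "\<And>v c. v \<in> S \<Longrightarrow> c \<noteq> 0 \<Longrightarrow> vscale c v \<in> S"
    and "\<And>v c. c \<noteq> 0 \<Longrightarrow> P (vscale c v) \<longleftrightarrow> P v"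
  shows "card {v\<in>S. P v} = card {j. j < length vs \<and> P (vs ! j)} * (CARD('a) - 1)"
proof -
  have "card (- {0 :: 'a}) = CARD('a) - 1"
    by (simp add: Compl_eq_Diff_UNIV card_Diff_singleton)
  then show ?thesis
    using bij_betw_same_card[OF bij_betw_proj_reps[OF assms]] by (simp add: card_cartesian_product)
qed

lemma span2_eq_image: "span2 a b = (\<lambda>(s, t). vscale s a + vscale t b) ` UNIV"
  by (auto simp: span2_def)

lemma subspace_span2: "V.subspace (span2 a b)"
  unfolding V.subspace_def
proof (intro conjI ballI allI)
  have "0 = vscale 0 a + vscale 0 b"
    by (simp add: fun_eq_iff)
  then show "0 \<in> span2 a b"
    unfolding span2_def by blast
next
  fix u w assume "u \<in> span2 a b" "w \<in> span2 a b"
  then obtain s t s' t' where "u = vscale s a + vscale t b" "w = vscale s' a + vscale t' b"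
    by (auto simp: span2_def)
  then have "u + w = vscale (s + s') a + vscale (t + t') b"
    by (simp add: fun_eq_iff algebra_simps)
  then show "u + w \<in> span2 a b"
    unfolding span2_def by blast
next
  fix c u assume "u \<in> span2 a b"
  then obtain s t where "u = vscale s a + vscale t b"
    by (auto simp: span2_def)
  then have "vscale c u = vscale (c * s) a + vscale (c * t) b"
    by (simp add: fun_eq_iff algebra_simps)
  then show "vscale c u \<in> span2 a b"
    unfolding span2_def by blast
qed

lemma finite_span2: "finite (span2 a b :: (nat \<Rightarrow> 'a::{finite,field}) set)"
  by (simp add: span2_eq_image)

lemma card_span2_le: "card (span2 a b :: (nat \<Rightarrow> 'a::{finite,field}) set) \<le> CARD('a) ^ 2"
  unfolding span2_eq_image
  by (rule order.trans[OF card_image_le]) (simp_all add: card_cartesian_product power2_eq_square)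

lemma card_span2_nonvanishing:
  fixes a b :: "nat \<Rightarrow> 'a::{finite,field}"
  assumes "\<And>u w. \<phi> (u + w) = \<phi> u + \<phi> w" "\<And>c u. \<phi> (vscale c u) = c * \<phi> u"
  shows "card {v\<in>span2 a b. \<phi> v \<noteq> 0} \<le> (CARD('a) - 1) * CARD('a)"
proof -
  have "CARD('a) * card {v\<in>span2 a b. \<phi> v \<noteq> 0} \<le> (CARD('a) - 1) * card (span2 a b)"
    using card_nonvanishing_subspace(1)[OF subspace_span2 _ assms]
    by (simp add: span2_eq_image)
  also have "\<dots> \<le> (CARD('a) - 1) * CARD('a) ^ 2"
    by (simp add: card_span2_le)
  finally show ?thesis
    by (simp add: power2_eq_square)
qed

lemma finite_U_set: "finite (U_set k :: (nat \<Rightarrow> 'a::{finite,field}) set)"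
  using finite_vecs by (rule finite_subset[rotated]) (auto simp: U_set_def)

lemma zero_notin_U_set: "0 \<notin> U_set k"
  by (simp add: U_set_def)

lemma U_set_scale:
  assumes v: "v \<in> U_set k" and "c \<noteq> 0"
  shows "vscale c v \<in> U_set k"
proof -
  have "v = vscale (inverse c) (vscale c v)"
    using \<open>c \<noteq> 0\<close> by (simp add: fun_eq_iff)
  then have "vscale c v \<notin> U_first f \<and> vscale c v \<notin> U_second f" for f
    using v subspace_span2 unfolding U_set_def U_first_def U_second_def
    by (metis (no_types, lifting) V.subspace_scale mem_Collect_eq)
  moreover have "vscale c v \<in> vecs k" "vscale c v \<noteq> 0"
    using v \<open>c \<noteq> 0\<close> by (auto simp: U_set_def vecs_def fun_eq_iff)
  ultimately show ?thesis
    by (simp add: U_set_def)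
qed

definition U_point :: "'a::field \<times> ('a \<times> 'a) \<times> bool \<Rightarrow> nat \<Rightarrow> 'a" where
  "U_point = (\<lambda>(f, (a, b), first).
     if first then vscale a (ebas 1 + vscale f (ebas 2)) + vscale b (ebas 3 + vscale f (ebas 4))
     else vscale a (ebas 5 + vscale f (ebas 6)) + vscale b (ebas 7 + vscale f (ebas 8)))"

lemma U_point_apply:
  "U_point (f, (a, b), s) 0 = (if s then a else 0)"
  "U_point (f, (a, b), s) 1 = (if s then a * f else 0)"
  "U_point (f, (a, b), s) 2 = (if s then b else 0)"
  "U_point (f, (a, b), s) 3 = (if s then b * f else 0)"
  "U_point (f, (a, b), s) 4 = (if s then 0 else a)"
  "U_point (f, (a, b), s) 5 = (if s then 0 else a * f)"
  "U_point (f, (a, b), s) 6 = (if s then 0 else b)"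
  "U_point (f, (a, b), s) 7 = (if s then 0 else b * f)"
  "8 \<le> j \<Longrightarrow> U_point (f, (a, b), s) j = 0"
  by (auto simp: U_point_def ebas_def)

lemma inj_on_U_point: "inj_on U_point (UNIV \<times> (- {(0, 0)}) \<times> UNIV)"
proof (rule inj_onI)
  fix x y
  assume x: "x \<in> UNIV \<times> (- {(0, 0)}) \<times> UNIV" and y: "y \<in> UNIV \<times> (- {(0, 0)}) \<times> UNIV"
    and eq: "U_point x = U_point y"
  obtain f a b s f' a' b' s' where xy: "x = (f, (a, b), s)" "y = (f', (a', b'), s')"
    by (cases x, cases y) auto
  have nonzero: "a \<noteq> 0 \<or> b \<noteq> 0" "a' \<noteq> 0 \<or> b' \<noteq> 0"
    using x y xy by auto
  note coord = fun_cong[OF eq, unfolded xy]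
  have "s = s'"
    using coord[of 0] coord[of 2] coord[of 4] coord[of 6] nonzero
    unfolding U_point_apply by (cases s; cases s') auto
  moreover have "a = a'" "b = b'"
    using coord[of 0] coord[of 2] coord[of 4] coord[of 6] \<open>s = s'\<close>
    unfolding U_point_apply by (cases s; auto)+
  moreover have "f = f'"
    using coord[of 1] coord[of 3] coord[of 5] coord[of 7] \<open>s = s'\<close> \<open>a = a'\<close> \<open>b = b'\<close> nonzero
    unfolding U_point_apply by (cases s) auto
  ultimately show "x = y"
    using xy by simp
qed

lemma U_point_nonzero_not_in_U_set:
  assumes "(a, b) \<noteq> (0, 0)" "8 \<le> k"
  shows "U_point (f, (a, b), s) \<in> vecs k - {0} - U_set k"
proof -
  have "U_point (f, (a, b), s) \<in> vecs k"
    using assms(2) by (simp add: vecs_def U_point_apply)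
  moreover have "U_point (f, (a, b), s) \<noteq> 0"
  proof
    assume "U_point (f, (a, b), s) = 0"
    then have "U_point (f, (a, b), s) j = 0" for j
      by simp
    from this[of 0] this[of 2] this[of 4] this[of 6] show False
      using assms(1) unfolding U_point_apply by (cases s) auto
  qed
  moreover have "U_point (f, (a, b), s) \<in> U_first f \<union> U_second f"
    by (auto simp: U_point_def U_first_def U_second_def span2_def)
  ultimately show ?thesis
    by (auto simp: U_set_def)
qed

lemma card_U_set_le:
  assumes "8 \<le> k"
  shows "card (U_set k :: (nat \<Rightarrow> 'a::{finite,field}) set) + 2 * CARD('a) * (CARD('a) ^ 2 - 1)
    \<le> CARD('a) ^ k - 1"
proof -
  let ?P = "(UNIV :: 'a set) \<times> (- {(0 :: 'a, 0 :: 'a)}) \<times> (UNIV :: bool set)"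
  let ?U = "U_set k :: (nat \<Rightarrow> 'a) set"
  have points: "U_point ` ?P \<subseteq> vecs k - {0} - ?U"
    using U_point_nonzero_not_in_U_set[OF _ assms] by auto
  have U: "?U \<subseteq> vecs k - {0}"
    by (auto simp: U_set_def)
  have "card (U_point ` ?P) = 2 * CARD('a) * (CARD('a) ^ 2 - 1)"
    by (subst card_image[OF inj_on_U_point])
      (simp add: card_cartesian_product power2_eq_square Compl_eq_Diff_UNIV card_Diff_singleton)
  moreover have "card ?U + card (U_point ` ?P) = card (?U \<union> U_point ` ?P)"
  proof (rule card_Un_disjoint[symmetric])
    show "finite ?U"
      using finite_subset[OF U] finite_vecs by blast
    show "?U \<inter> U_point ` ?P = {}"
      using points by blast
  qed simp
  moreover have "\<dots> \<le> card (vecs k - {0} :: (nat \<Rightarrow> 'a) set)"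
  proof (rule card_mono)
    show "?U \<union> U_point ` ?P \<subseteq> vecs k - {0}"
      using U points by blast
  qed (simp add: finite_vecs)
  moreover have "\<dots> = CARD('a) ^ k - 1"
    using V.subspace_0[OF subspace_vecs[of k, where 'a = 'a]] by (simp add: card_Diff_singleton finite_vecs card_vecs)
  ultimately show ?thesis
    by linarith
qed

lemma length_C2_le:
  fixes vs :: "(nat \<Rightarrow> 'a::{finite,field}) list"
  assumes "proj_reps vs (U_set k)" "8 \<le> k"
  shows "length vs * (CARD('a) - 1) + 2 * CARD('a) * (CARD('a) ^ 2 - 1) \<le> CARD('a) ^ k - 1"
  using card_proj_reps_filter[OF assms(1) zero_notin_U_set U_set_scale, of "\<lambda>_. True"]
    card_U_set_le[OF assms(2), where 'a = 'a]
  by simp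

lemma card_nonvanishing_vecs:
  fixes x :: "nat \<Rightarrow> 'a::{finite,field}"
  assumes "i < k" "x i \<noteq> 0"
  shows "card {v\<in>vecs k. dot k x v \<noteq> 0} = (CARD('a) - 1) * CARD('a) ^ (k - 1)"
proof -
  let ?q = "CARD('a)"
  define e :: "nat \<Rightarrow> 'a" where "e = (\<lambda>j. if j = i then 1 else 0)"
  have "e \<in> vecs k" "dot k x e = x i"
    using assms by (simp_all add: e_def vecs_def dot_def if_distrib cong: if_cong)
  then have "?q * card {v\<in>vecs k. dot k x v \<noteq> 0} = (?q - 1) * card (vecs k :: (nat \<Rightarrow> 'a) set)"
    using assms(2) by (intro card_nonvanishing_subspace(2) subspace_vecs finite_vecs dot_add_right
        dot_scale_right) metis
  also have "\<dots> = ?q * ((?q - 1) * ?q ^ (k - 1))"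
    using assms(1) by (simp add: card_vecs flip: power_Suc)
  finally show ?thesis
    by simp
qed

lemma card_nonvanishing_U_first_U_second:
  fixes \<phi> :: "(nat \<Rightarrow> 'a::{finite,field}) \<Rightarrow> 'a"
  assumes "\<And>u w. \<phi> (u + w) = \<phi> u + \<phi> w" "\<And>c u. \<phi> (vscale c u) = c * \<phi> u"
  shows "card (\<Union>f. {v\<in>U_first f. \<phi> v \<noteq> 0} \<union> {v\<in>U_second f. \<phi> v \<noteq> 0})
    \<le> 2 * CARD('a) ^ 2 * (CARD('a) - 1)"
proof -
  have "card (\<Union>f. {v\<in>U_first f. \<phi> v \<noteq> 0} \<union> {v\<in>U_second f. \<phi> v \<noteq> 0})
      \<le> (\<Sum>f\<in>UNIV. card ({v\<in>U_first f. \<phi> v \<noteq> 0} \<union> {v\<in>U_second f. \<phi> v \<noteq> 0}))"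
    by (rule card_UN_le) simp
  also have "\<dots> \<le> (\<Sum>f\<in>(UNIV :: 'a set). 2 * ((CARD('a) - 1) * CARD('a)))"
  proof (rule sum_mono)
    fix f :: 'a
    show "card ({v\<in>U_first f. \<phi> v \<noteq> 0} \<union> {v\<in>U_second f. \<phi> v \<noteq> 0})
        \<le> 2 * ((CARD('a) - 1) * CARD('a))"
      unfolding U_first_def U_second_def mult_2
      by (rule order.trans[OF card_Un_le add_mono]; rule card_span2_nonvanishing[OF assms])
  qed
  finally show ?thesis
    by (simp add: power2_eq_square algebra_simps)
qed

lemma hweight_C2_ge:
  fixes vs :: "(nat \<Rightarrow> 'a::{finite,field}) list"
  assumes reps: "proj_reps vs (U_set k)" and x: "i < k" "x i \<noteq> 0"
  shows "CARD('a) ^ (k - 1) \<le> hweight (length vs) (encode k vs x) + 2 * CARD('a) ^ 2"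
proof -
  let ?q = "CARD('a)"
  let ?w = "hweight (length vs) (encode k vs x)"
  let ?nonvanishing = "\<lambda>S. {v\<in>S. dot k x v \<noteq> 0}"
  let ?outside = "\<Union>f. ?nonvanishing (U_first f) \<union> ?nonvanishing (U_second f)"
  have "(?q - 1) * ?q ^ (k - 1) = card (?nonvanishing (vecs k))"
    using card_nonvanishing_vecs[of i k x, OF x] by simp
  also have "\<dots> \<le> card (?nonvanishing (U_set k) \<union> ?outside)"
  proof (rule card_mono)
    show "finite (?nonvanishing (U_set k) \<union> ?outside)"
      by (simp add: finite_U_set U_first_def U_second_def finite_span2)
  qed (auto simp: U_set_def)
  also have "\<dots> \<le> card (?nonvanishing (U_set k)) + card ?outside"
    by (rule card_Un_le)
  also have "card (?nonvanishing (U_set k)) = ?w * (?q - 1)"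
    using card_proj_reps_filter[OF reps zero_notin_U_set U_set_scale, of "\<lambda>v. dot k x v \<noteq> 0"]
    by (simp add: dot_scale_right hweight_encode)
  also have "card ?outside \<le> 2 * ?q ^ 2 * (?q - 1)"
    by (rule card_nonvanishing_U_first_U_second[OF dot_add_right dot_scale_right])
  finally have "(?q - 1) * ?q ^ (k - 1) \<le> (?q - 1) * (?w + 2 * ?q ^ 2)"
    by (simp add: algebra_simps)
  moreover have "0 < ?q - 1"
    using card_field_ge_2[where 'a = 'a] by simp
  ultimately show ?thesis
    by simp
qed

lemma mult_32_square_le_power:
  fixes q :: nat
  assumes "2 \<le> q" "8 \<le> k"
  shows "32 * q ^ 2 \<le> q ^ (k - 1)"
proof -
  have "32 \<le> q ^ 5"
    using power_mono[OF assms(1), of 5] by simp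
  then have "32 * q ^ 2 \<le> q ^ 5 * q ^ 2"
    by (rule mult_right_mono) simp
  also have "\<dots> = q ^ 7"
    by (simp flip: power_add)
  also have "\<dots> \<le> q ^ (k - 1)"
    using assms by (intro power_increasing) auto
  finally show ?thesis .
qed

lemma C2_parameters:
  fixes vs :: "(nat \<Rightarrow> 'a::{finite,field}) list"
  assumes reps: "proj_reps vs (U_set k)" and "8 \<le> k"
  defines "d \<equiv> CARD('a) ^ (k - 1) - 2 * CARD('a) ^ 2"
  shows "k \<le> code_dim (gen_code k vs)"
    and "d \<le> min_dist (length vs) (gen_code k vs)"
    and "d \<le> length vs"
proof -
  have "32 * CARD('a) ^ 2 \<le> CARD('a) ^ (k - 1)"
    using mult_32_square_le_power[OF card_field_ge_2 \<open>8 \<le> k\<close>] .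
  moreover have "0 < CARD('a) ^ 2"
    by simp
  ultimately have d_pos: "0 < d"
    unfolding d_def by linarith
  have weight: "d \<le> hweight (length vs) (encode k vs x)" if "i < k" "x i \<noteq> 0" for x i
    using hweight_C2_ge[of vs k i x, OF reps that] unfolding d_def by simp
  have k_pos: "0 < k"
    using \<open>8 \<le> k\<close> by simp
  show "d \<le> min_dist (length vs) (gen_code k vs)"
    by (rule min_dist_gen_code_ge(1)) (fact weight d_pos k_pos)+
  show "d \<le> length vs"
    by (rule min_dist_gen_code_ge(2)) (fact weight d_pos k_pos)+
  have "encode k vs x \<noteq> 0" if "i < k" "x i \<noteq> 0" for x i
    using weight[of i x, OF that] d_pos by (auto simp: hweight_def)
  then show "k \<le> code_dim (gen_code k vs)"
    by (rule code_dim_gen_code_ge)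
qed

lemma plotkin_violated_q_ge_3:
  fixes q X n d :: nat
  assumes "3 \<le> q" "2 * q ^ 2 < X" "n * (q - 1) + 2 * q * (q ^ 2 - 1) \<le> q * X - 1" "3 \<le> n"
    and "X - 2 * q ^ 2 \<le> d"
  shows "(q - 1) * (q * X) * (n - 3) < q * (q * X - 1) * d"
proof -
  define Q Y m where "Q = int q" and "Y = int X" and "m = int n - 3"
  have "1 \<le> q * X" "1 \<le> q ^ 2"
    using assms(1,2) by simp_all
  moreover have "int (n * (q - 1) + 2 * q * (q ^ 2 - 1)) \<le> int (q * X - 1)"
    using assms(3) by (simp only: of_nat_le_iff)
  ultimately have "int n * (Q - 1) + 2 * Q * (Q ^ 2 - 1) \<le> Q * Y - 1"
    using assms(1) by (simp add: of_nat_diff Q_def Y_def)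
  then have "(Q - 1) * m \<le> Q * Y - 2 * Q ^ 3 - Q + 2"
    by (simp add: m_def algebra_simps power2_eq_square power3_eq_cube)
  then have "Q * Y * ((Q - 1) * m) \<le> Q * Y * (Q * Y - 2 * Q ^ 3 - Q + 2)"
    by (rule mult_left_mono) (simp add: Q_def Y_def)
  \<comment> \<open>The slack Q Y (Q - 3) is where q \<ge> 3 is needed.\<close>
  moreover have "Q * (Q * Y - 1) * (Y - 2 * Q ^ 2)
      = Q * Y * (Q * Y - 2 * Q ^ 3 - Q + 2) + Q * Y * (Q - 3) + 2 * Q ^ 3"
    by (simp add: algebra_simps power2_eq_square power3_eq_cube)
  moreover have "0 \<le> Q * Y * (Q - 3)" "0 < Q ^ 3"
    using assms(1) by (simp_all add: Q_def Y_def)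
  ultimately have "Q * Y * ((Q - 1) * m) < Q * (Q * Y - 1) * (Y - 2 * Q ^ 2)"
    by linarith
  moreover have "int ((q - 1) * (q * X) * (n - 3)) = Q * Y * ((Q - 1) * m)"
    using assms(1,4) by (simp add: of_nat_diff Q_def Y_def m_def)
  moreover have "int (q * (q * X - 1) * (X - 2 * q ^ 2)) = Q * (Q * Y - 1) * (Y - 2 * Q ^ 2)"
    using \<open>1 \<le> q * X\<close> assms(2) by (simp add: of_nat_diff Q_def Y_def)
  ultimately have "(q - 1) * (q * X) * (n - 3) < q * (q * X - 1) * (X - 2 * q ^ 2)"
    by linarith
  also have "\<dots> \<le> q * (q * X - 1) * d"
    using assms(5) by simp
  finally show ?thesis .
qed

lemma plotkin_violated_q_eq_2:
  fixes X n d :: nat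
  assumes "16 < X" "n + 12 \<le> 2 * X - 1" "X - 8 \<le> d"
  shows "X * (n - 6) < 2 * (X - 1) * d"
proof -
  have "X * (n - 6) \<le> X * (2 * X - 19)"
    using assms by simp
  also have "\<dots> < 2 * (X - 1) * (X - 8)"
  proof -
    have "int X * (2 * int X - 19) < 2 * (int X - 1) * (int X - 8)"
      using assms(1) by (simp add: algebra_simps)
    moreover have "int (X * (2 * X - 19)) = int X * (2 * int X - 19)"
      using assms(1) by (simp add: of_nat_diff)
    moreover have "int (2 * (X - 1) * (X - 8)) = 2 * (int X - 1) * (int X - 8)"
      using assms(1) by (simp add: of_nat_diff)
    ultimately show ?thesis
      by linarith
  qed
  also have "\<dots> \<le> 2 * (X - 1) * d"
    using assms(3) by simp
  finally show ?thesis .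
qed

theorem theorem4p2:
  fixes q k :: nat and vs :: "(nat \<Rightarrow> 'a::{finite,field}) list"
  assumes "card (UNIV :: 'a set) = q"
    and "k \<ge> 8"
    and "proj_reps vs (U_set k)"
  shows "(q = 2 \<longrightarrow> CM_defect 2 (length vs) (gen_code k vs) \<le> 2) \<and>
         (q \<ge> 3 \<longrightarrow> CM_defect 2 (length vs) (gen_code k vs) \<le> 1)"
proof -
  define n C X where "n = length vs" and "C = gen_code k vs" and "X = q ^ (k - 1)"
  have q: "CARD('a) = q" "2 \<le> q"
    using assms(1) card_field_ge_2[where 'a = 'a] by auto
  have "q ^ k = q * X"
    using assms(2) by (simp add: X_def flip: power_Suc)
  then have length_le: "n * (q - 1) + 2 * q * (q ^ 2 - 1) \<le> q * X - 1"
    using length_C2_le[OF assms(3,2)] by (simp add: n_def q)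
  have dim: "k \<le> code_dim C" and dist: "X - 2 * q ^ 2 \<le> min_dist n C"
    and "X - 2 * q ^ 2 \<le> n"
    using C2_parameters[OF assms(3,2)] by (simp_all add: n_def C_def X_def q)
  moreover have "32 * q ^ 2 \<le> X"
    using mult_32_square_le_power[OF q(2) assms(2)] by (simp add: X_def)
  moreover have "4 \<le> q ^ 2"
    using power_mono[OF q(2), of 2] by simp
  ultimately have "6 \<le> n" "2 * q ^ 2 < X"
    by linarith+
  show ?thesis
  proof (intro conjI impI)
    assume "3 \<le> q"
    then have "(q - 1) * q ^ k * (n - 1 * (2 + 1)) < q * (q ^ k - 1) * min_dist n C"
      using plotkin_violated_q_ge_3[OF _ \<open>2 * q ^ 2 < X\<close> length_le _ dist] \<open>6 \<le> n\<close> \<open>q ^ k = q * X\<close>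
      by simp
    then show "CM_defect 2 (length vs) (gen_code k vs) \<le> 1"
      using CM_defect_less[of 1 2 n k C] \<open>6 \<le> n\<close> dim assms(2) by (simp add: n_def C_def q)
  next
    assume "q = 2"
    then have "(q - 1) * q ^ (k - 1) * (n - 2 * (2 + 1)) < q * (q ^ (k - 1) - 1) * min_dist n C"
      using plotkin_violated_q_eq_2[of X n "min_dist n C"] length_le dist \<open>32 * q ^ 2 \<le> X\<close>
      by (simp add: X_def)
    then show "CM_defect 2 (length vs) (gen_code k vs) \<le> 2"
      using CM_defect_less[of 2 2 n "k - 1" C] \<open>6 \<le> n\<close> dim assms(2) by (simp add: n_def C_def q)
  qed
qed

end
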